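(* Let $a,c>0$ and $b,d<0$ be real numbers with $x_A=x_B$, and let $W_0(z)=1$, $W_1(z)=z$, $W_n(z)=(az+b)W_{n-1}(z)+(cz+d)W_{n-2}(z)$ for $n\ge2$. Then $u\le x_\Delta^-$, $u<0$, $(-1)^nW_n(u)>0$ for every $n\ge0$, and if $u\neq x_\Delta^-$ then $u$ is an isolated limit of zeros of $\{W_n(z)\}$.
   Context: Notation: $A(z)=az+b$, $B(z)=cz+d$, $x_A=-b/a$, $x_B=-d/c$, $\Delta(z)=A(z)^2+4B(z)$, $\Delta_\Delta=c^2-a^2B(x_A)$, $x_\Delta^\pm=x_A+\frac{-2c\pm2\sqrt{\Delta_\Delta}}{a^2}$ (here $x_\Delta^+=x_A=x_B$), $g(z)=(1-a)z^2-(b+c)z-d$, $\Delta_g=(b+c)^2+4d(1-a)$, $F=\Delta_g-\Delta_\Delta=d(a-2)^2+bc(2-a)+b^2$. The zeros of $g$ are $x_g^\pm=\frac{b+c}{2(1-a)}\pm\frac{\sqrt{\Delta_g}}{2|1-a|}$ if $a\neq1$, and $x_g^\pm=-d/(b+c)$ if $a=1$ and $b+c\ne0$. Define $u=x_\Delta^-$ if $a<2$ and $F\le0$; $u=x_g^+$ if $a<1$ and $F>0$; $u=x_g^-$ otherwise. For $z=re^{i\theta}$, $\theta\in(-\pi,\pi]$, $\sqrt z:=\sqrt r e^{i\theta/2}$, and $\lambda_\pm(z)=\frac{A(z)\pm\sqrt{\Delta(z)}}{2}$. A number $z^*$ is a limit of zeros if there exist zeros $z_n$ of $W_n$ with $z_n\to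 z^*$; it is isolated if $|\lambda_+(z^* )|\ne|\lambda_-(z^* )|$. *)

theory Defs
  imports "HOL-Analysis.Analysis"
begin

fun W :: "real \<Rightarrow> real \<Rightarrow> real \<Rightarrow> real \<Rightarrow> nat \<Rightarrow> 'a::real_algebra_1 \<Rightarrow> 'a" where
  "W a b c d 0 z = 1"
| "W a b c d (Suc 0) z = z"
| "W a b c d (Suc (Suc n)) z =
     (of_real a * z + of_real b) * W a b c d (Suc n) z + (of_real c * z + of_real d) * W a b c d n z"

definition xA :: "real \<Rightarrow> real \<Rightarrow> real" where "xA a b = - b / a"
definition xB :: "real \<Rightarrow> real \<Rightarrow> real" where "xB c d = - d / c"

definition DeltaDelta :: "real \<Rightarrow> real \<Rightarrow> real \<Rightarrow> real \<Rightarrow> real" where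
  "DeltaDelta a b c d = c^2 - a^2 * (c * xA a b + d)"

definition xDelta_minus :: "real \<Rightarrow> real \<Rightarrow> real \<Rightarrow> real \<Rightarrow> real" where
  "xDelta_minus a b c d = xA a b + (- 2 * c - 2 * sqrt (DeltaDelta a b c d)) / a^2"

definition Delta_g :: "real \<Rightarrow> real \<Rightarrow> real \<Rightarrow> real \<Rightarrow> real" where
  "Delta_g a b c d = (b + c)^2 + 4 * d * (1 - a)"

definition FF :: "real \<Rightarrow> real \<Rightarrow> real \<Rightarrow> real \<Rightarrow> real" where
  "FF a b c d = d * (a - 2)^2 + b * c * (2 - a) + b^2"

definition xg_plus :: "real \<Rightarrow> real \<Rightarrow> real \<Rightarrow> real \<Rightarrow> real" where
  "xg_plus a b c d =
     (if a \<noteq> 1 then (b + c) / (2 * (1 - a)) + sqrt (Delta_g a b c d) / (2 * \<bar>1 - a\<bar>)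
      else - d / (b + c))"

definition xg_minus :: "real \<Rightarrow> real \<Rightarrow> real \<Rightarrow> real \<Rightarrow> real" where
  "xg_minus a b c d =
     (if a \<noteq> 1 then (b + c) / (2 * (1 - a)) - sqrt (Delta_g a b c d) / (2 * \<bar>1 - a\<bar>)
      else - d / (b + c))"

definition upt_u :: "real \<Rightarrow> real \<Rightarrow> real \<Rightarrow> real \<Rightarrow> real" where
  "upt_u a b c d =
     (if a < 2 \<and> FF a b c d \<le> 0 then xDelta_minus a b c d
      else if a < 1 \<and> FF a b c d > 0 then xg_plus a b c d
      else xg_minus a b c d)"

text \<open>Principal square root: for z = r e^{i\<theta>}, \<theta> in (-pi,pi], sqrt z = sqrt r e^{i\<theta>/2}.\<close>
definition psqrt :: "complex \<Rightarrow> complex" where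
  "psqrt z = complex_of_real (sqrt (cmod z)) * exp (\<i> * complex_of_real (Arg z / 2))"

definition DeltaC :: "real \<Rightarrow> real \<Rightarrow> real \<Rightarrow> real \<Rightarrow> complex \<Rightarrow> complex" where
  "DeltaC a b c d z = (of_real a * z + of_real b)^2 + 4 * (of_real c * z + of_real d)"

definition lam_plus :: "real \<Rightarrow> real \<Rightarrow> real \<Rightarrow> real \<Rightarrow> complex \<Rightarrow> complex" where
  "lam_plus a b c d z = ((of_real a * z + of_real b) + psqrt (DeltaC a b c d z)) / 2"

definition lam_minus :: "real \<Rightarrow> real \<Rightarrow> real \<Rightarrow> real \<Rightarrow> complex \<Rightarrow> complex" where
  "lam_minus a b c d z = ((of_real a * z + of_real b) - psqrt (DeltaC a b c d z)) / 2"

text \<open>z* is a limit of zeros: there are zeros z_n of W_n (for all sufficiently large n,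
  since W_0 = 1 has no zeros) with z_n \<rightarrow> z*.\<close>
definition limit_of_zeros :: "real \<Rightarrow> real \<Rightarrow> real \<Rightarrow> real \<Rightarrow> complex \<Rightarrow> bool" where
  "limit_of_zeros a b c d zs \<longleftrightarrow>
     (\<exists>zn :: nat \<Rightarrow> complex. (\<forall>\<^sub>F n in sequentially. W a b c d n (zn n) = 0) \<and> zn \<longlonglongrightarrow> zs)"

definition isolated_pt :: "real \<Rightarrow> real \<Rightarrow> real \<Rightarrow> real \<Rightarrow> complex \<Rightarrow> bool" where
  "isolated_pt a b c d zs \<longleftrightarrow> cmod (lam_plus a b c d zs) \<noteq> cmod (lam_minus a b c d zs)"

end

theory Submission
  imports Defs
begin

text \<open>
  Write t for the common root x_A = x_B, so that A(z) = a (z - t) and B(z) = c (z - t).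
  If F \<le> 0, then u = x_\<Delta>^- and at u the characteristic polynomial
  \<lambda>^2 - A(u) \<lambda> - B(u) has the double root -2c/a; the closed form of a linear
  recurrence with a double root shows (-1)^n W_n(u) > 0.
  If F > 0, then u is a simple root of g, i.e. u is itself a root of
  \<lambda>^2 = A(u) \<lambda> + B(u), so W_n(u) = u^n. Since g(-2c/a) < 0 < g(0), u lies in (-2c/a, 0),
  which forces u = \<lambda>_+(u), |\<lambda>_+(u)| < |\<lambda>_-(u)| and \<Delta>(u) > 0, hence u < x_\<Delta>^-.
  For real z near u the sign of (-1)^n W_n(z) is eventually that of \<lambda>_+(z) - z, which changes
  sign at u together with g; the intermediate value theorem yields real zeros of W_n
  accumulating at u.
\<close>

lemma linrec_closed_form:
  fixes f :: "nat \<Rightarrow> 'a::comm_ring_1"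
  assumes rec: "\<And>n. f (Suc (Suc n)) = (L + M) * f (Suc n) - L * M * f n"
  shows "f n * (L - M) = (f 1 - M * f 0) * L ^ n - (f 1 - L * f 0) * M ^ n"
proof (induction n rule: induct_nat_012)
  case (ge2 n)
  have "f (Suc (Suc n)) * (L - M) = (L + M) * (f (Suc n) * (L - M)) - L * M * (f n * (L - M))"
    by (simp add: rec algebra_simps)
  also have "\<dots> = (f 1 - M * f 0) * L ^ Suc (Suc n) - (f 1 - L * f 0) * M ^ Suc (Suc n)"
    unfolding ge2 by (simp add: algebra_simps)
  finally show ?case .
qed (simp_all add: algebra_simps)

lemma linrec_tendsto_dominant_root:
  fixes f :: "nat \<Rightarrow> 'a::real_normed_field"
  assumes rec: "\<And>n. f (Suc (Suc n)) = (L + M) * f (Suc n) - L * M * f n"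
    and dom: "norm L < norm M"
  shows "(\<lambda>n. f n / M ^ n) \<longlonglongrightarrow> (f 1 - L * f 0) / (M - L)"
proof -
  have "M \<noteq> 0" and "L - M \<noteq> 0" using dom by auto
  have "f n / M ^ n = ((f 1 - M * f 0) * (L / M) ^ n - (f 1 - L * f 0)) / (L - M)" for n
  proof -
    have "f n = ((f 1 - M * f 0) * L ^ n - (f 1 - L * f 0) * M ^ n) / (L - M)"
      using linrec_closed_form[of f L M n, OF rec] \<open>L - M \<noteq> 0\<close> by (simp add: eq_divide_eq)
    then show ?thesis using \<open>M \<noteq> 0\<close> by (simp add: power_divide diff_divide_distrib)
  qed
  moreover have "(\<lambda>n. ((f 1 - M * f 0) * (L / M) ^ n - (f 1 - L * f 0)) / (L - M))
      \<longlonglongrightarrow> ((f 1 - M * f 0) * 0 - (f 1 - L * f 0)) / (L - M)"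
    using dom \<open>L - M \<noteq> 0\<close> by (intro tendsto_intros) (simp_all add: norm_divide divide_less_eq)
  moreover have "((f 1 - M * f 0) * 0 - (f 1 - L * f 0)) / (L - M) = (f 1 - L * f 0) / (M - L)"
    by (metis diff_0 minus_diff_eq minus_divide_divide mult_zero_right)
  ultimately show ?thesis by simp
qed

lemma linrec_double_root:
  fixes f :: "nat \<Rightarrow> 'a::comm_ring_1"
  assumes rec: "\<And>n. f (Suc (Suc n)) = 2 * L * f (Suc n) - L ^ 2 * f n"
  shows "L * f n = L ^ n * (L * f 0 + of_nat n * (f 1 - L * f 0))"
proof (induction n rule: induct_nat_012)
  case (ge2 n)
  have "L * f (Suc (Suc n)) = 2 * L * (L * f (Suc n)) - L ^ 2 * (L * f n)"
    by (simp add: rec algebra_simps)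
  also have "\<dots> = L ^ Suc (Suc n) * (L * f 0 + of_nat (Suc (Suc n)) * (f 1 - L * f 0))"
    unfolding ge2 by (simp add: algebra_simps power2_eq_square)
  finally show ?case .
qed (simp_all add: algebra_simps)

lemma linrec_geometric:
  fixes f :: "nat \<Rightarrow> 'a::comm_ring_1"
  assumes rec: "\<And>n. f (Suc (Suc n)) = p * f (Suc n) + q * f n"
    and root: "x ^ 2 = p * x + q" and init: "f 1 = x * f 0"
  shows "f n = f 0 * x ^ n"
proof (induction n rule: induct_nat_012)
  case (ge2 n)
  have "f (Suc (Suc n)) = f 0 * x ^ n * (p * x + q)"
    by (simp add: rec ge2 algebra_simps)
  also have "\<dots> = f 0 * x ^ Suc (Suc n)"
    by (simp add: root[symmetric] power2_eq_square)
  finally show ?case .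
qed (use init in \<open>simp_all add: mult.commute\<close>)

lemma W_of_real: "W a b c d n (of_real x) = of_real (W a b c d n x)"
  by (induction a b c d n x rule: W.induct) auto

lemma continuous_on_W: "continuous_on S (\<lambda>z::real. W a b c d n z)"
proof (induction n rule: induct_nat_012)
  case (ge2 n)
  then show ?case
    by simp (intro continuous_intros)
qed (simp_all add: continuous_on_id)

lemma continuous_on_root_of_sign_change:
  fixes f :: "real \<Rightarrow> real"
  assumes "x \<le> y" and "continuous_on {x..y} f" and "f x * f y \<le> 0"
  shows "\<exists>z\<in>{x..y}. f z = 0"
proof (cases "f x \<le> 0")
  case True
  with assms have "0 \<le> f y \<or> f x = 0" by (auto simp: mult_le_0_iff)
  with True assms show ?thesis using IVT'[of f x 0 y] by force
next
  case False
  with assms have "f y \<le> 0" by (auto simp: mult_le_0_iff)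
  with False assms show ?thesis using IVT2'[of f y 0 x] by force
qed

lemma eventually_at_right_pos_both_sides:
  fixes h :: "real \<Rightarrow> real"
  assumes "isCont h u" and "0 < h u"
  shows "\<forall>\<^sub>F \<delta> in at_right 0. 0 < h (u - \<delta>) \<and> 0 < h (u + \<delta>)"
proof -
  have "((\<lambda>\<delta>. h (u - \<delta>)) \<longlongrightarrow> h u) (at_right 0)" and "((\<lambda>\<delta>. h (u + \<delta>)) \<longlongrightarrow> h u) (at_right 0)"
    by (auto intro!: isCont_tendsto_compose[OF \<open>isCont h u\<close>] tendsto_eq_intros)
  then show ?thesis
    using \<open>0 < h u\<close> by (intro eventually_conj order_tendstoD(1))
qed

lemma tendsto_selection_of_eventually_near:
  fixes S :: "nat \<Rightarrow> 'a::metric_space set"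
  assumes near: "\<And>e. e > 0 \<Longrightarrow> \<forall>\<^sub>F n in sequentially. \<exists>x\<in>S n. dist x l < e"
  shows "\<exists>y. (\<forall>\<^sub>F n in sequentially. y n \<in> S n) \<and> y \<longlonglongrightarrow> l"
proof -
  define y where "y n = (SOME x. x \<in> S n \<and> dist l x < infdist l (S n) + inverse (Suc n))" for n
  have y: "y n \<in> S n \<and> dist l (y n) < infdist l (S n) + inverse (Suc n)" if "S n \<noteq> {}" for n
  proof -
    have "(INF x\<in>S n. dist l x) < infdist l (S n) + inverse (Suc n)"
      using that by (simp add: infdist_notempty)
    moreover have "bdd_below (dist l ` S n)"
      by (rule bdd_belowI[of _ 0]) auto
    ultimately have "\<exists>x\<in>S n. dist l x < infdist l (S n) + inverse (Suc n)"
      using that by (simp add: cINF_less_iff)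
    then show ?thesis unfolding y_def by (rule someI2_bex) blast
  qed
  have "\<forall>\<^sub>F n in sequentially. y n \<in> S n"
    using near[OF zero_less_one] by eventually_elim (use y in blast)
  moreover have "y \<longlonglongrightarrow> l"
  proof (rule tendstoI)
    fix e :: real
    assume "e > 0"
    have "\<forall>\<^sub>F n in sequentially. inverse (Suc n) < e / 2"
      using \<open>e > 0\<close> by (intro order_tendstoD(2)[OF LIMSEQ_inverse_real_of_nat]) simp
    with near[OF half_gt_zero[OF \<open>e > 0\<close>]]
    show "\<forall>\<^sub>F n in sequentially. dist (y n) l < e"
    proof eventually_elim
      case (elim n)
      then obtain x where "x \<in> S n" "dist x l < e / 2" by blast
      then have "infdist l (S n) < e / 2" by (metis dist_commute infdist_le le_less_trans)
      moreover have "dist l (y n) < infdist l (S n) + inverse (Suc n)"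
        using y[of n] \<open>x \<in> S n\<close> by blast
      ultimately show ?case using elim by (simp add: dist_commute)
    qed
  qed
  ultimately show ?thesis by blast
qed

definition Delta_real :: "real \<Rightarrow> real \<Rightarrow> real \<Rightarrow> real \<Rightarrow> real \<Rightarrow> real" where
  "Delta_real a b c d z = (a*z + b)^2 + 4*(c*z + d)"

definition lam_plus_real :: "real \<Rightarrow> real \<Rightarrow> real \<Rightarrow> real \<Rightarrow> real \<Rightarrow> real" where
  "lam_plus_real a b c d z = (a*z + b + sqrt (Delta_real a b c d z)) / 2"

definition lam_minus_real :: "real \<Rightarrow> real \<Rightarrow> real \<Rightarrow> real \<Rightarrow> real \<Rightarrow> real" where
  "lam_minus_real a b c d z = (a*z + b - sqrt (Delta_real a b c d z)) / 2"

text \<open>The paper's g; g(z) = 0 says that z is itself a root of \<lambda>^2 = A(z) \<lambda> + B(z).\<close>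
definition g_real :: "real \<Rightarrow> real \<Rightarrow> real \<Rightarrow> real \<Rightarrow> real \<Rightarrow> real" where
  "g_real a b c d z = (1 - a)*z^2 - (b + c)*z - d"

lemma lam_real_add: "lam_plus_real a b c d z + lam_minus_real a b c d z = a*z + b"
  by (simp add: lam_plus_real_def lam_minus_real_def field_simps)

lemma lam_real_diff: "lam_plus_real a b c d z - lam_minus_real a b c d z = sqrt (Delta_real a b c d z)"
  by (simp add: lam_plus_real_def lam_minus_real_def field_simps)

lemma lam_real_mult:
  assumes "Delta_real a b c d z \<ge> 0"
  shows "lam_plus_real a b c d z * lam_minus_real a b c d z = - (c*z + d)"
proof -
  have "lam_plus_real a b c d z * lam_minus_real a b c d z
      = ((a*z + b)^2 - (sqrt (Delta_real a b c d z))^2) / 4"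
    by (simp add: lam_plus_real_def lam_minus_real_def power2_eq_square field_simps)
  then show ?thesis using assms by (simp add: Delta_real_def)
qed

lemma lam_real_shifted_mult:
  assumes "Delta_real a b c d z \<ge> 0"
  shows "(lam_plus_real a b c d z - z) * (lam_minus_real a b c d z - z) = g_real a b c d z"
proof -
  have "(lam_plus_real a b c d z - z) * (lam_minus_real a b c d z - z)
      = lam_plus_real a b c d z * lam_minus_real a b c d z
        - z * (lam_plus_real a b c d z + lam_minus_real a b c d z) + z^2"
    by (simp add: power2_eq_square algebra_simps)
  also have "\<dots> = - (c*z + d) - z * (a*z + b) + z^2"
    by (simp only: lam_real_mult[OF assms] lam_real_add)
  finally show ?thesis by (simp add: g_real_def power2_eq_square algebra_simps)
qed

lemma Delta_real_at_g_root:
  assumes "g_real a b c d u = 0"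
  shows "Delta_real a b c d u = (2*u - (a*u + b))^2"
  using assms by (simp add: Delta_real_def g_real_def power2_eq_square algebra_simps)

lemma W_at_g_root:
  assumes "g_real a b c d u = 0"
  shows "W a b c d n u = u ^ n"
proof -
  have "u^2 = (a*u + b) * u + (c*u + d)"
    using assms by (simp add: g_real_def power2_eq_square algebra_simps)
  then show ?thesis
    using linrec_geometric[of "\<lambda>n. W a b c d n u" "a*u + b" "c*u + d" u] by simp
qed

lemma W_div_lam_minus_real_tendsto:
  assumes D: "Delta_real a b c d z > 0" and A: "a*z + b < 0"
  shows "(\<lambda>n. W a b c d n z / lam_minus_real a b c d z ^ n)
    \<longlonglongrightarrow> (lam_plus_real a b c d z - z) / (lam_plus_real a b c d z - lam_minus_real a b c d z)"
proof -
  let ?L = "lam_plus_real a b c d z" and ?M = "lam_minus_real a b c d z"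
  have "?L * ?M = - (c*z + d)"
    using lam_real_mult[of a b c d z] D by simp
  then have rec: "W a b c d (Suc (Suc n)) z = (?L + ?M) * W a b c d (Suc n) z - ?L * ?M * W a b c d n z" for n
    by (simp add: lam_real_add) (simp add: algebra_simps)
  have "?L - ?M > 0"
    using D by (simp add: lam_real_diff)
  then have "\<bar>?L\<bar> < - ?M" and "?M < 0"
    using lam_real_add[of a b c d z] A by (simp_all add: abs_less_iff)
  then have "norm ?L < norm ?M"
    by simp
  moreover have "(z - ?L) / (?M - ?L) = (?L - z) / (?L - ?M)"
    by (metis minus_diff_eq minus_divide_divide)
  ultimately show ?thesis
    using linrec_tendsto_dominant_root[of "\<lambda>n. W a b c d n z", OF rec] by simp
qed

lemma eventually_sign_W:
  assumes D: "Delta_real a b c d z > 0" and A: "a*z + b < 0" and ne: "lam_plus_real a b c d z \<noteq> z"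
  shows "\<forall>\<^sub>F n in sequentially. 0 < (-1)^n * W a b c d n z * (lam_plus_real a b c d z - z)"
proof -
  let ?L = "lam_plus_real a b c d z" and ?M = "lam_minus_real a b c d z"
  have "?L - ?M > 0"
    using D by (simp add: lam_real_diff)
  then have "?M < 0"
    using lam_real_add[of a b c d z] A by linarith
  have lim: "(\<lambda>n. W a b c d n z / ?M ^ n * (?L - z)) \<longlonglongrightarrow> (?L - z)^2 / (?L - ?M)"
    using tendsto_mult_right[OF W_div_lam_minus_real_tendsto[OF D A], of "?L - z"]
    by (simp add: power2_eq_square)
  have "(?L - z)^2 / (?L - ?M) > 0"
    using \<open>?L - ?M > 0\<close> ne by (intro divide_pos_pos) auto
  from order_tendstoD(1)[OF lim this] show ?thesis
  proof eventually_elim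
    case (elim n)
    have "W a b c d n z / ?M ^ n * (?L - z) = (-1)^n * W a b c d n z * (?L - z) / (- ?M) ^ n"
      by (simp add: power_minus[of ?M n])
    moreover have "0 < (- ?M) ^ n"
      using \<open>?M < 0\<close> by simp
    ultimately show ?case
      using elim by (metis zero_less_divide_iff not_less_iff_gr_or_eq)
  qed
qed

lemma eventually_W_root_between:
  assumes "z1 \<le> z2"
    and "Delta_real a b c d z1 > 0" "a*z1 + b < 0" "Delta_real a b c d z2 > 0" "a*z2 + b < 0"
    and change: "(lam_plus_real a b c d z1 - z1) * (lam_plus_real a b c d z2 - z2) < 0"
  shows "\<forall>\<^sub>F n in sequentially. \<exists>x\<in>{z1..z2}. W a b c d n x = 0"
proof -
  have "lam_plus_real a b c d z1 \<noteq> z1" "lam_plus_real a b c d z2 \<noteq> z2"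
    using change by auto
  with assms have "\<forall>\<^sub>F n in sequentially.
      0 < (-1)^n * W a b c d n z1 * (lam_plus_real a b c d z1 - z1)
    \<and> 0 < (-1)^n * W a b c d n z2 * (lam_plus_real a b c d z2 - z2)"
    by (intro eventually_conj eventually_sign_W)
  then show ?thesis
  proof eventually_elim
    case (elim n)
    then have "0 < ((-1)^n * W a b c d n z1 * (lam_plus_real a b c d z1 - z1))
        * ((-1)^n * W a b c d n z2 * (lam_plus_real a b c d z2 - z2))"
      by simp
    also have "\<dots> = W a b c d n z1 * W a b c d n z2
        * ((lam_plus_real a b c d z1 - z1) * (lam_plus_real a b c d z2 - z2))"
      by (simp add: algebra_simps flip: power_mult_distrib)
    finally have "W a b c d n z1 * W a b c d n z2 < 0"
      using change by (metis less_imp_le mult_nonneg_nonpos not_less)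
    then show ?case
      using continuous_on_root_of_sign_change[OF \<open>z1 \<le> z2\<close> continuous_on_W] by simp
  qed
qed

lemma isolated_pt_of_real:
  assumes D: "Delta_real a b c d u > 0" and A: "a*u + b \<noteq> 0"
  shows "isolated_pt a b c d (of_real u)"
proof -
  have "DeltaC a b c d (of_real u) = of_real (Delta_real a b c d u)"
    by (simp add: DeltaC_def Delta_real_def)
  with D have "psqrt (DeltaC a b c d (of_real u)) = of_real (sqrt (Delta_real a b c d u))"
    by (simp add: psqrt_def)
  then have "lam_plus a b c d (of_real u) = of_real (lam_plus_real a b c d u)"
    and "lam_minus a b c d (of_real u) = of_real (lam_minus_real a b c d u)"
    by (simp_all add: lam_plus_def lam_minus_def lam_plus_real_def lam_minus_real_def)
  moreover have "\<bar>lam_plus_real a b c d u\<bar> \<noteq> \<bar>lam_minus_real a b c d u\<bar>"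
  proof -
    have "lam_plus_real a b c d u \<noteq> lam_minus_real a b c d u"
      using D lam_real_diff[of a b c d u] by auto
    moreover have "lam_plus_real a b c d u \<noteq> - lam_minus_real a b c d u"
      using A lam_real_add[of a b c d u] by auto
    ultimately show ?thesis
      by (simp add: abs_eq_iff)
  qed
  ultimately show ?thesis
    by (simp add: isolated_pt_def)
qed

text \<open>
  With g(u) = 0, the hypothesis 2u > A(u) says that u = \<lambda>_+(u); the factorisation of g says
  that u is a simple root of g, with g'(u) = s.
\<close>
lemma eventually_lam_plus_real_sign_change:
  assumes A: "a*u + b < 0" and dom: "2*u - (a*u + b) > 0"
    and g: "\<And>z. g_real a b c d z = (z - u) * (p * (z - u) + s)" and "s \<noteq> 0"
  shows "\<forall>\<^sub>F \<delta> in at_right 0. 0 < \<delta>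
    \<and> Delta_real a b c d (u - \<delta>) > 0 \<and> a*(u - \<delta>) + b < 0
    \<and> Delta_real a b c d (u + \<delta>) > 0 \<and> a*(u + \<delta>) + b < 0
    \<and> (lam_plus_real a b c d (u - \<delta>) - (u - \<delta>)) * (lam_plus_real a b c d (u + \<delta>) - (u + \<delta>)) < 0"
proof -
  have Du: "Delta_real a b c d u = (2*u - (a*u + b))^2"
    using g[of u] by (intro Delta_real_at_g_root) simp
  then have Mu: "lam_minus_real a b c d u - u = a*u + b - 2*u"
    using dom by (simp add: lam_minus_real_def field_simps)
  have cont: "isCont (Delta_real a b c d) u" "isCont (\<lambda>z. - (a*z + b)) u"
    "isCont (\<lambda>z. z - lam_minus_real a b c d z) u" "isCont (\<lambda>z. s^2 - (p * (z - u))^2) u"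
    by (auto simp: Delta_real_def [abs_def] lam_minus_real_def [abs_def] intro!: continuous_intros)
  have pos: "0 < Delta_real a b c d u" "0 < - (a*u + b)"
    "0 < u - lam_minus_real a b c d u" "0 < s^2 - (p * (u - u))^2"
    using A dom Du Mu \<open>s \<noteq> 0\<close> by auto
  from eventually_at_right_real[OF zero_less_one]
    eventually_at_right_pos_both_sides[OF cont(1) pos(1)] eventually_at_right_pos_both_sides[OF cont(2) pos(2)]
    eventually_at_right_pos_both_sides[OF cont(3) pos(3)] eventually_at_right_pos_both_sides[OF cont(4) pos(4)]
  show ?thesis
  proof eventually_elim
    case (elim \<delta>)
    let ?z1 = "u - \<delta>" and ?z2 = "u + \<delta>"
    have "g_real a b c d ?z1 * g_real a b c d ?z2 = \<delta>^2 * ((p * \<delta>)^2 - s^2)"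
      by (simp add: g power2_eq_square algebra_simps)
    also have "\<dots> < 0"
      using elim by (simp add: mult_pos_neg)
    \<comment> \<open>(\<lambda>_+(z) - z) (\<lambda>_-(z) - z) = g(z), and \<lambda>_-(z) - z < 0 near u.\<close>
    finally have "(lam_plus_real a b c d ?z1 - ?z1) * (lam_plus_real a b c d ?z2 - ?z2)
        * ((lam_minus_real a b c d ?z1 - ?z1) * (lam_minus_real a b c d ?z2 - ?z2)) < 0"
      using elim by (simp add: lam_real_shifted_mult[symmetric] less_imp_le algebra_simps)
    moreover have "(lam_minus_real a b c d ?z1 - ?z1) * (lam_minus_real a b c d ?z2 - ?z2) > 0"
      using elim by (simp add: mult_neg_neg)
    ultimately show ?case
      using elim by (auto simp: mult_less_0_iff)
  qed
qed

lemma limit_of_zeros_at_simple_g_root: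
  assumes "a*u + b < 0" and "2*u - (a*u + b) > 0"
    and "\<And>z. g_real a b c d z = (z - u) * (p * (z - u) + s)" and "s \<noteq> 0"
  shows "limit_of_zeros a b c d (of_real u)"
proof -
  have "\<forall>\<^sub>F n in sequentially. \<exists>z\<in>{z :: complex. W a b c d n z = 0}. dist z (of_real u) < e"
    if "e > 0" for e
  proof -
    obtain \<delta> where "\<delta> \<in> {0<..<e}" and "0 < \<delta>"
      and "Delta_real a b c d (u - \<delta>) > 0" "a*(u - \<delta>) + b < 0"
      and "Delta_real a b c d (u + \<delta>) > 0" "a*(u + \<delta>) + b < 0"
      and "(lam_plus_real a b c d (u - \<delta>) - (u - \<delta>)) * (lam_plus_real a b c d (u + \<delta>) - (u + \<delta>)) < 0"
      using eventually_happens'[OF trivial_limit_at_right_real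
          eventually_conj[OF eventually_at_right_real[OF \<open>e > 0\<close>]
            eventually_lam_plus_real_sign_change[OF assms]]]
      by blast
    then have "\<forall>\<^sub>F n in sequentially. \<exists>x\<in>{u - \<delta>..u + \<delta>}. W a b c d n x = 0"
      by (intro eventually_W_root_between) simp_all
    then show ?thesis
    proof eventually_elim
      case (elim n)
      then obtain x where "x \<in> {u - \<delta>..u + \<delta>}" "W a b c d n x = 0"
        by blast
      then have "(of_real x :: complex) \<in> {z. W a b c d n z = 0}"
        and "dist (of_real x :: complex) (of_real u) < e"
        using \<open>\<delta> \<in> {0<..<e}\<close> by (auto simp: W_of_real dist_real_def)
      then show ?case by blast
    qed
  qed
  from tendsto_selection_of_eventually_near[OF this] show ?thesis
    unfolding limit_of_zeros_def by simp
qed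

lemma quadratic_factor_at_root:
  fixes p B d s u z :: real
  assumes "p \<noteq> 0" and "s^2 = B^2 + 4*d*p" and "u = (B + s) / (2*p)"
  shows "p*z^2 - B*z - d = (z - u) * (p*(z - u) + s)"
proof -
  have "2*p*u = B + s"
    using assms by simp
  have "4*p * (u * (p*u - s)) = (2*p*u)^2 - 2*(2*p*u) * s"
    by (simp add: power2_eq_square algebra_simps)
  also have "\<dots> = (B + s)^2 - 2*(B + s) * s"
    by (simp only: \<open>2*p*u = B + s\<close>)
  also have "\<dots> = 4*p * (-d)"
    using assms(2) by (simp add: power2_eq_square algebra_simps)
  finally have "4*p * (u * (p*u - s)) = 4*p * (-d)" .
  then have "u * (p*u - s) = -d"
    using \<open>p \<noteq> 0\<close> by (metis mult_cancel_left mult_eq_0_iff zero_neq_numeral)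
  moreover have "(z - u) * (p*(z - u) + s) = p*z^2 - (2*p*u - s)*z + u * (p*u - s)"
    by (simp add: power2_eq_square algebra_simps)
  ultimately show ?thesis
    using \<open>2*p*u = B + s\<close> by simp
qed

lemma factored_root_between:
  fixes f :: "real \<Rightarrow> real"
  assumes f: "\<And>z. f z = (z - u) * (p*(z - u) + s)"
    and "0 < s" and "m < 0" and "f m < 0" and "0 < f 0"
  shows "m < u" and "u < 0"
proof -
  \<comment> \<open>q is affine with q u = s > 0; each identity writes q at the middle one of three points
    as a positive combination of its values at the outer two.\<close>
  define q where "q z = p*(z - u) + s" for z
  have interp0: "q 0 * (u - m) = q m * u - s * m" and interpm: "q m * (- u) = s * (- m) + q 0 * (m - u)"
    by (simp_all add: q_def algebra_simps)
  have fm: "(m - u) * q m < 0" and f0: "u * q 0 < 0"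
    using assms by (simp_all add: q_def)
  show "u < 0"
  proof (rule ccontr)
    assume "\<not> u < 0"
    with f0 have "0 < u" and "q 0 < 0"
      by (auto simp: mult_less_0_iff)
    with fm \<open>m < 0\<close> have "0 < q m"
      by (auto simp: mult_less_0_iff)
    with \<open>0 < u\<close> \<open>0 < s\<close> \<open>m < 0\<close> have "0 < q m * u - s * m"
      using mult_pos_pos[of "q m" u] mult_pos_neg[of s m] by linarith
    with interp0 \<open>q 0 < 0\<close> \<open>m < 0\<close> \<open>0 < u\<close> show False
      by (metis diff_gt_0_iff_gt less_trans mult_neg_pos not_less_iff_gr_or_eq)
  qed
  show "m < u"
  proof (rule ccontr)
    assume "\<not> m < u"
    with fm have "u < m" and "q m < 0"
      by (auto simp: mult_less_0_iff)
    from f0 \<open>u < 0\<close> have "0 < q 0"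
      by (auto simp: mult_less_0_iff)
    with \<open>u < m\<close> \<open>0 < s\<close> \<open>m < 0\<close> have "0 < s * (- m) + q 0 * (m - u)"
      using mult_pos_pos[of s "- m"] mult_pos_pos[of "q 0" "m - u"] by linarith
    with interpm \<open>q m < 0\<close> \<open>u < 0\<close> show False
      by (metis mult_neg_pos neg_0_less_iff_less not_less_iff_gr_or_eq)
  qed
qed

lemma common_root_parametrisation:
  fixes a b c d :: real
  assumes "0 < a" and "0 < c" and "b < 0" and "xA a b = xB c d"
  obtains t where "0 < t" and "b = - (a * t)" and "d = - (c * t)"
proof
  show "0 < xA a b"
    using \<open>0 < a\<close> \<open>b < 0\<close> by (simp add: xA_def divide_neg_pos)
  show "b = - (a * xA a b)"
    using \<open>0 < a\<close> by (simp add: xA_def)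
  show "d = - (c * xA a b)"
    using \<open>0 < c\<close> \<open>xA a b = xB c d\<close> by (simp add: xB_def)
qed

lemma FF_common_root: "FF a (- (a * t)) c (- (c * t)) = t * (a^2 * t + 2 * c * (a - 2))"
  by (simp add: FF_def power2_eq_square algebra_simps)

lemma upt_u_simple_g_root:
  assumes "0 < a" and "0 < c" and "0 < t" and psi: "0 < a^2 * t + 2 * c * (a - 2)"
  defines "u \<equiv> upt_u a (- (a * t)) c (- (c * t))"
  shows "\<exists>p s. 0 < s \<and> (\<forall>z. g_real a (- (a * t)) c (- (c * t)) z = (z - u) * (p * (z - u) + s))"
proof -
  have F: "0 < FF a (- (a * t)) c (- (c * t))"
    using psi \<open>0 < t\<close> by (simp add: FF_common_root)
  show ?thesis
  proof (cases "a = 1")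
    case True
    with psi \<open>0 < c\<close> have "c < t"
      by simp
    from True F have "u = c * t / (c - t)"
      by (simp add: u_def upt_u_def xg_minus_def)
    with True \<open>c < t\<close> have "g_real a (- (a * t)) c (- (c * t)) z = (z - u) * (0 * (z - u) + (t - c))" for z
      by (simp add: g_real_def field_simps)
    with \<open>c < t\<close> show ?thesis
      by (intro exI[of _ 0] exI[of _ "t - c"]) simp
  next
    case False
    define s where "s = sqrt (Delta_g a (- (a * t)) c (- (c * t)))"
    have "Delta_g a (- (a * t)) c (- (c * t)) = c^2 + FF a (- (a * t)) c (- (c * t))"
      by (simp add: Delta_g_def FF_def power2_eq_square algebra_simps)
    with F have "0 < Delta_g a (- (a * t)) c (- (c * t))"
      by (simp add: add_nonneg_pos)
    then have "0 < s" and s2: "s^2 = (- (a * t) + c)^2 + 4 * (- (c * t)) * (1 - a)"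
      by (simp_all add: s_def Delta_g_def)
    \<comment> \<open>For a \<noteq> 1 both branches of upt_u (x_g^+ if a < 1, x_g^- if a > 1) are this root.\<close>
    have "u = (- (a * t) + c + s) / (2 * (1 - a))"
    proof (cases "a < 1")
      case True
      with F show ?thesis
        by (simp add: u_def upt_u_def xg_plus_def s_def add_divide_distrib)
    next
      case False
      with \<open>a \<noteq> 1\<close> have "\<bar>1 - a\<bar> = - (1 - a)"
        by simp
      with False F \<open>a \<noteq> 1\<close> show ?thesis
        by (simp add: u_def upt_u_def xg_minus_def s_def[symmetric]
            add_divide_distrib diff_divide_distrib minus_divide_right)
    qed
    with \<open>a \<noteq> 1\<close> s2 have "g_real a (- (a * t)) c (- (c * t)) z = (z - u) * ((1 - a) * (z - u) + s)" for z
      using quadratic_factor_at_root[of "1 - a" s "- (a * t) + c" "- (c * t)" u z]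
      by (simp add: g_real_def)
    with \<open>0 < s\<close> show ?thesis
      by blast
  qed
qed

lemma xDelta_minus_common_root:
  assumes "a \<noteq> 0" and "0 < c"
  shows "xDelta_minus a (- (a * t)) c (- (c * t)) = t - 4 * c / a^2"
proof -
  have "DeltaDelta a (- (a * t)) c (- (c * t)) = c^2"
    using \<open>a \<noteq> 0\<close> by (simp add: DeltaDelta_def xA_def)
  with assms show ?thesis
    by (simp add: xDelta_minus_def xA_def diff_divide_distrib)
qed

lemma upt_u_double_root:
  assumes "0 < a" and "0 < c" and "0 < t" and psi: "a^2 * t + 2 * c * (a - 2) \<le> 0"
  shows "upt_u a (- (a * t)) c (- (c * t)) = t - 4 * c / a^2"
proof -
  have "0 < a^2 * t"
    using \<open>0 < a\<close> \<open>0 < t\<close> by simp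
  with psi have "2 * c * (a - 2) < 0"
    by linarith
  with \<open>0 < c\<close> have "a < 2"
    by (simp add: mult_less_0_iff)
  moreover have "FF a (- (a * t)) c (- (c * t)) \<le> 0"
    unfolding FF_common_root using psi \<open>0 < t\<close> by (simp add: mult_nonneg_nonpos)
  ultimately show ?thesis
    using \<open>0 < a\<close> \<open>0 < c\<close> by (simp add: upt_u_def xDelta_minus_common_root)
qed

lemma double_root_case:
  assumes "0 < a" and "0 < c" and psi: "a^2 * t + 2 * c * (a - 2) \<le> 0"
  shows "t - 4 * c / a^2 < 0" and "0 < (-1)^n * W a (- (a * t)) c (- (c * t)) n (t - 4 * c / a^2)"
proof -
  define v where "v = t - 4 * c / a^2"
  define L where "L = - 2 * c / a"
  have "a^2 * (v - L) = a^2 * t + 2 * c * (a - 2)"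
    using \<open>0 < a\<close> by (simp add: v_def L_def power2_eq_square field_simps)
  with psi have "a^2 * (v - L) \<le> a^2 * 0"
    by simp
  with \<open>0 < a\<close> have "v - L \<le> 0"
    using mult_le_cancel_left_pos[of "a^2" "v - L" 0] by simp
  moreover have "L < 0"
    using \<open>0 < a\<close> \<open>0 < c\<close> by (simp add: L_def)
  ultimately show "t - 4 * c / a^2 < 0"
    by (simp add: v_def)
  \<comment> \<open>At v the characteristic polynomial has the double root L.\<close>
  have "W a (- (a * t)) c (- (c * t)) (Suc (Suc n)) v
      = 2 * L * W a (- (a * t)) c (- (c * t)) (Suc n) v - L^2 * W a (- (a * t)) c (- (c * t)) n v" for n
    using \<open>0 < a\<close> by (simp add: v_def L_def power2_eq_square field_simps)
  from linrec_double_root[of "\<lambda>n. W a (- (a * t)) c (- (c * t)) n v", OF this]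
  have closed: "L * W a (- (a * t)) c (- (c * t)) n v = L^n * (L + n * (v - L))"
    by simp
  have "(- L) * ((-1)^n * W a (- (a * t)) c (- (c * t)) n v)
      = - ((-1)^n * (L * W a (- (a * t)) c (- (c * t)) n v))"
    by (simp add: algebra_simps)
  also have "\<dots> = (- L)^n * (- L - n * (v - L))"
    unfolding closed by (simp add: power_minus[of L n] algebra_simps)
  finally have "(- L) * ((-1)^n * W a (- (a * t)) c (- (c * t)) n v) = (- L)^n * (- L - n * (v - L))" .
  moreover have "real n * (v - L) \<le> 0"
    using \<open>v - L \<le> 0\<close> by (simp add: mult_nonneg_nonpos)
  then have "0 < (- L)^n * (- L - n * (v - L))"
    using \<open>L < 0\<close> by (intro mult_pos_pos) auto
  ultimately have "0 < (- L) * ((-1)^n * W a (- (a * t)) c (- (c * t)) n v)"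
    by linarith
  then have "0 < (-1)^n * W a (- (a * t)) c (- (c * t)) n v"
    by (rule zero_less_mult_pos) (use \<open>L < 0\<close> in simp)
  then show "0 < (-1)^n * W a (- (a * t)) c (- (c * t)) n (t - 4 * c / a^2)"
    unfolding v_def .
qed

lemma Delta_real_common_root:
  "Delta_real a (- (a * t)) c (- (c * t)) z = (z - t) * (a^2 * (z - t) + 4 * c)"
  by (simp add: Delta_real_def power2_eq_square algebra_simps)

lemma lt_xDelta_minus_of_Delta_real_pos:
  assumes "0 < a" and "z < t" and "0 < Delta_real a (- (a * t)) c (- (c * t)) z"
  shows "z < t - 4 * c / a^2"
proof -
  from assms have "a^2 * (z - t) + 4 * c < 0"
    by (auto simp: Delta_real_common_root zero_less_mult_iff)
  with \<open>0 < a\<close> show ?thesis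
    by (simp add: field_simps)
qed

lemma g_real_common_root_neg:
  assumes "0 < a" and "0 < c" and psi: "0 < a^2 * t + 2 * c * (a - 2)"
  shows "g_real a (- (a * t)) c (- (c * t)) (- 2 * c / a) < 0"
proof -
  have "a^2 * g_real a (- (a * t)) c (- (c * t)) (- 2 * c / a) = - c * (a^2 * t + 2 * c * (a - 2))"
    using \<open>0 < a\<close> by (simp add: g_real_def power2_eq_square field_simps)
  also have "\<dots> < 0"
    using psi \<open>0 < c\<close> by (simp add: mult_neg_pos)
  finally show ?thesis
    using \<open>0 < a\<close> by (simp add: mult_less_0_iff)
qed

lemma common_root_A_lt_twice:
  fixes a c t u :: real
  assumes "0 < a" and "0 < t" and psi: "0 < a^2 * t + 2 * c * (a - 2)"
    and "- 2 * c / a < u" and "u < 0"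
  shows "a * u + - (a * t) < 2 * u"
proof -
  have "0 < (2 - a) * (a * u) + a^2 * t"
  proof (cases "a \<le> 2")
    case True
    have "(2 - a) * (- 2 * c) \<le> (2 - a) * (a * u)"
      using True \<open>- 2 * c / a < u\<close> \<open>0 < a\<close> by (intro mult_left_mono) (simp_all add: field_simps)
    with psi show ?thesis
      by (simp add: algebra_simps)
  next
    case False
    then have "0 \<le> (2 - a) * (a * u)"
      using \<open>u < 0\<close> \<open>0 < a\<close> by (intro mult_nonpos_nonpos) (simp_all add: mult_pos_neg less_imp_le)
    moreover have "0 < a^2 * t"
      using \<open>0 < a\<close> \<open>0 < t\<close> by simp
    ultimately show ?thesis
      by linarith
  qed
  also have "\<dots> = a * (2 * u - (a * u + - (a * t)))"
    by (simp add: power2_eq_square algebra_simps)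
  finally have "0 < 2 * u - (a * u + - (a * t))"
    by (rule zero_less_mult_pos) (use \<open>0 < a\<close> in simp)
  then show ?thesis
    by simp
qed

lemma simple_root_case:
  assumes "0 < a" and "0 < c" and "0 < t" and psi: "0 < a^2 * t + 2 * c * (a - 2)"
  defines "u \<equiv> upt_u a (- (a * t)) c (- (c * t))"
  shows "u < t - 4 * c / a^2" and "u < 0"
    and "0 < (-1)^n * W a (- (a * t)) c (- (c * t)) n u"
    and "limit_of_zeros a (- (a * t)) c (- (c * t)) (of_real u)"
    and "isolated_pt a (- (a * t)) c (- (c * t)) (of_real u)"
proof -
  obtain p s where "0 < s" and g: "\<And>z. g_real a (- (a * t)) c (- (c * t)) z = (z - u) * (p * (z - u) + s)"
    using upt_u_simple_g_root[OF assms(1-4)] unfolding u_def by blast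
  have "- 2 * c / a < 0"
    using \<open>0 < a\<close> \<open>0 < c\<close> by (simp add: divide_neg_pos)
  moreover have "0 < g_real a (- (a * t)) c (- (c * t)) 0"
    using \<open>0 < c\<close> \<open>0 < t\<close> by (simp add: g_real_def)
  ultimately have "- 2 * c / a < u" and "u < 0"
    using factored_root_between[OF g \<open>0 < s\<close> _ g_real_common_root_neg[OF \<open>0 < a\<close> \<open>0 < c\<close> psi]]
    by simp_all
  then have A: "a * u + - (a * t) < 0" and dom: "0 < 2 * u - (a * u + - (a * t))"
    using common_root_A_lt_twice[OF \<open>0 < a\<close> \<open>0 < t\<close> psi] \<open>0 < a\<close> \<open>0 < t\<close>
    by (simp_all add: mult_pos_neg add_neg_neg)
  have gu: "g_real a (- (a * t)) c (- (c * t)) u = 0"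
    using g[of u] by simp
  then have D: "0 < Delta_real a (- (a * t)) c (- (c * t)) u"
    using dom by (simp add: Delta_real_at_g_root)
  show "u < 0"
    by fact
  show "u < t - 4 * c / a^2"
    using lt_xDelta_minus_of_Delta_real_pos[OF \<open>0 < a\<close> _ D] \<open>u < 0\<close> \<open>0 < t\<close> by simp
  show "0 < (-1)^n * W a (- (a * t)) c (- (c * t)) n u"
    using \<open>u < 0\<close> by (simp add: W_at_g_root[OF gu] flip: power_mult_distrib)
  show "limit_of_zeros a (- (a * t)) c (- (c * t)) (of_real u)"
    using limit_of_zeros_at_simple_g_root[OF A dom g] \<open>0 < s\<close> by simp
  show "isolated_pt a (- (a * t)) c (- (c * t)) (of_real u)"
    using isolated_pt_of_real[OF D less_imp_neq[OF A]] .
qed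

theorem lemma3p5:
  fixes a b c d :: real
  assumes "a > 0" and "c > 0" and "b < 0" and "d < 0"
    and "xA a b = xB c d"
  shows "upt_u a b c d \<le> xDelta_minus a b c d
    \<and> upt_u a b c d < 0
    \<and> (\<forall>n. (-1) ^ n * W a b c d n (upt_u a b c d) > (0::real))
    \<and> (upt_u a b c d \<noteq> xDelta_minus a b c d \<longrightarrow>
         limit_of_zeros a b c d (complex_of_real (upt_u a b c d))
         \<and> isolated_pt a b c d (complex_of_real (upt_u a b c d)))"
proof -
  obtain t where "0 < t" and b: "b = - (a * t)" and d: "d = - (c * t)"
    using common_root_parametrisation assms by blast
  have v: "xDelta_minus a (- (a * t)) c (- (c * t)) = t - 4 * c / a^2"
    using \<open>0 < a\<close> \<open>0 < c\<close> by (intro xDelta_minus_common_root) simp_all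
  show ?thesis
  proof (cases "a^2 * t + 2 * c * (a - 2) \<le> 0")
    case True
    with upt_u_double_root[OF \<open>0 < a\<close> \<open>0 < c\<close> \<open>0 < t\<close>] double_root_case[OF \<open>0 < a\<close> \<open>0 < c\<close>]
    show ?thesis
      unfolding b d v by simp
  next
    case False
    with simple_root_case[OF \<open>0 < a\<close> \<open>0 < c\<close> \<open>0 < t\<close>] show ?thesis
      unfolding b d v by (simp add: less_imp_le)
  qed
qed

end
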